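(* An algebraic quantum hypergroup $(A,\Delta)$ is both of compact type and of discrete type if and only if $A$ is finite-dimensional.
   Context: **Standing definitions.** All algebras are over $\mathbb C$, associative, possibly without identity, with non-degenerate product. $M(A)$ denotes the multiplier algebra and $\iota$ the identity map. *Comultiplication.* A regular comultiplication is a linear map $\Delta:A\to M(A\otimes A)$, not assumed multiplicative, such that: - $\Delta(a)(1\otimes b)$, $(a\otimes1)\Delta(b)$, $\Delta(a)(b\otimes1)$ and $(1\otimes a)\Delta(b)$ lie in $A\otimes A$; - $(a\otimes1\otimes1)(\Delta\otimes\iota)(\Delta(b)(1\otimes c))=(\iota\otimes\Delta)((a\otimes1)\Delta(b))(1\otimes1\otimes c)$. *Counit.* A counit is a homomorphism $\varepsilon$ with $(\varepsilon\otimes\iota)\Delta=\iota=(\iota\otimes\varepsilon)\Delta$. *Integrals.* A left integral is a nonzero $\varphi$ with $(\iota\otimes\varphi)\Delta(a)=\varphi(a)1$ in $M(A)$. A functional is faithful if $f(ab)=0\ \forall b$ or $f(ba)=0\ \forall b$ forces $a=0$. *Antipode.* An antipode relative to a faithful left integral $\varphi$ is a bijective linear anti-homomorphism $S$ with $S((\iota\otimes\varphi)(\Delta(a)(1\otimes b)))=(\iota\otimes\varphi)((1\otimes a)\Delta(b))$. *Algebraic quantum hypergroup.* A pair $(A,\Delta)$ with a regular comultiplication admitting a counit $\varepsilon$, a faithful left integral $\varphi$ and an antipode $S$ relative to $\varphi$. **Types.** - $(A,\Delta)$ is of *compact type* if $A$ has an identity. - A *left co-integral* is a nonzero $h\in A$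 with $ah=\varepsilon(a)h$ for all $a\in A$. - $(A,\Delta)$ is of *discrete type* if a left co-integral exists. *)

theory Defs
  imports Complex_Main
begin

text \<open>An algebra over the complex numbers is modelled by a type of class ring
(associative, not necessarily unital) together with a scalar multiplication
s making it a complex vector space, compatible with the product.\<close>

definition calg :: "(complex \<Rightarrow> 'x::ring \<Rightarrow> 'x) \<Rightarrow> bool" where
  "calg s \<longleftrightarrow> Vector_Spaces.vector_space s \<and>
     (\<forall>c x y. s c (x * y) = s c x * y \<and> s c (x * y) = x * s c y)"

definition nondeg :: "'x::ring itself \<Rightarrow> bool" where
  "nondeg T \<longleftrightarrow> (\<forall>a::'x. (\<forall>b. a * b = 0) \<longrightarrow> a = 0) \<and>
                 (\<forall>a::'x. (\<forall>b. b * a = 0) \<longrightarrow> a = 0)"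

definition fin_dim :: "(complex \<Rightarrow> 'x::ab_group_add \<Rightarrow> 'x) \<Rightarrow> bool" where
  "fin_dim s \<longleftrightarrow> (\<exists>B. finite B \<and> module.span s B = UNIV)"

definition bilin :: "(complex \<Rightarrow> 'u::ab_group_add \<Rightarrow> 'u) \<Rightarrow> (complex \<Rightarrow> 'v::ab_group_add \<Rightarrow> 'v)
   \<Rightarrow> (complex \<Rightarrow> 'w::ab_group_add \<Rightarrow> 'w) \<Rightarrow> ('u \<Rightarrow> 'v \<Rightarrow> 'w) \<Rightarrow> bool" where
  "bilin su sv sw t \<longleftrightarrow> (\<forall>v. Vector_Spaces.linear su sw (\<lambda>u. t u v)) \<and>
                         (\<forall>u. Vector_Spaces.linear sv sw (t u))"

text \<open>(W, t) is a tensor product of U and V: t is bilinear, its range spans W,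
and for linearly independent u_i, a relation sum t u_i v_i = 0 forces all v_i = 0.
This characterises W with t as U tensor V up to unique isomorphism.\<close>

definition is_tensor :: "(complex \<Rightarrow> 'u::ab_group_add \<Rightarrow> 'u) \<Rightarrow> (complex \<Rightarrow> 'v::ab_group_add \<Rightarrow> 'v)
   \<Rightarrow> (complex \<Rightarrow> 'w::ab_group_add \<Rightarrow> 'w) \<Rightarrow> ('u \<Rightarrow> 'v \<Rightarrow> 'w) \<Rightarrow> bool" where
  "is_tensor su sv sw t \<longleftrightarrow>
     Vector_Spaces.vector_space su \<and> Vector_Spaces.vector_space sv \<and> Vector_Spaces.vector_space sw \<and>
     bilin su sv sw t \<and>
     module.span sw {t u v | u v. True} = UNIV \<and>
     (\<forall>F g. finite F \<and> \<not> module.dependent su F \<and> (\<Sum>u\<in>F. t u (g u)) = 0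
              \<longrightarrow> (\<forall>u\<in>F. g u = 0))"

definition tlift :: "(complex \<Rightarrow> 'w::ab_group_add \<Rightarrow> 'w) \<Rightarrow> (complex \<Rightarrow> 'z::ab_group_add \<Rightarrow> 'z)
   \<Rightarrow> ('u \<Rightarrow> 'v \<Rightarrow> 'w) \<Rightarrow> ('u \<Rightarrow> 'v \<Rightarrow> 'z) \<Rightarrow> 'w \<Rightarrow> 'z" where
  "tlift sw sz t f = (SOME F. Vector_Spaces.linear sw sz F \<and> (\<forall>u v. F (t u v) = f u v))"

text \<open>The standing tensor set-up: A with scalar multiplication s1;
A\<otimes>A is the algebra 'b (scalars s2, tensor map t2, product (a\<otimes>b)(c\<otimes>d) = ac\<otimes>bd);
A\<otimes>A\<otimes>A is the algebra 'c = (A\<otimes>A)\<otimes>A (scalars s3, tensor map t3).\<close>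

definition tensor_setup :: "(complex \<Rightarrow> 'a::ring \<Rightarrow> 'a) \<Rightarrow> (complex \<Rightarrow> 'b::ring \<Rightarrow> 'b)
   \<Rightarrow> ('a \<Rightarrow> 'a \<Rightarrow> 'b) \<Rightarrow> (complex \<Rightarrow> 'c::ring \<Rightarrow> 'c) \<Rightarrow> ('b \<Rightarrow> 'a \<Rightarrow> 'c) \<Rightarrow> bool" where
  "tensor_setup s1 s2 t2 s3 t3 \<longleftrightarrow>
     calg s1 \<and> nondeg TYPE('a) \<and> calg s2 \<and> calg s3 \<and>
     is_tensor s1 s1 s2 t2 \<and> is_tensor s2 s1 s3 t3 \<and>
     (\<forall>a b c d. t2 a b * t2 c d = t2 (a * c) (b * d)) \<and>
     (\<forall>x a y b. t3 x a * t3 y b = t3 (x * y) (a * b))"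

text \<open>A multiplier of an algebra X is a pair (L, R) of linear maps
(left action m x = L x, right action x m = R x) with L(xy) = L(x)y,
R(xy) = xR(y) and x L(y) = R(x) y.\<close>

type_synonym 'x mult = "('x \<Rightarrow> 'x) \<times> ('x \<Rightarrow> 'x)"

definition is_mult :: "(complex \<Rightarrow> 'x::ring \<Rightarrow> 'x) \<Rightarrow> 'x mult \<Rightarrow> bool" where
  "is_mult s m \<longleftrightarrow> Vector_Spaces.linear s s (fst m) \<and> Vector_Spaces.linear s s (snd m) \<and>
     (\<forall>x y. fst m (x * y) = fst m x * y) \<and> (\<forall>x y. snd m (x * y) = x * snd m y) \<and>
     (\<forall>x y. x * fst m y = snd m x * y)"

definition mmult :: "'x mult \<Rightarrow> 'x mult \<Rightarrow> 'x mult" where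
  "mmult m n = (fst m \<circ> fst n, snd n \<circ> snd m)"

definition embed :: "'x::ring \<Rightarrow> 'x mult" where
  "embed z = ((\<lambda>x. z * x), (\<lambda>x. x * z))"

definition in_alg :: "'x::ring mult \<Rightarrow> bool" where
  "in_alg m \<longleftrightarrow> (\<exists>z. m = embed z)"

definition elt :: "'x::ring mult \<Rightarrow> 'x" where
  "elt m = (THE z. m = embed z)"

context
  fixes s1 :: "complex \<Rightarrow> 'a::ring \<Rightarrow> 'a"
    and s2 :: "complex \<Rightarrow> 'b::ring \<Rightarrow> 'b"
    and t2 :: "'a \<Rightarrow> 'a \<Rightarrow> 'b"
    and s3 :: "complex \<Rightarrow> 'c::ring \<Rightarrow> 'c"
    and t3 :: "'b \<Rightarrow> 'a \<Rightarrow> 'c"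
begin

definition one_tens :: "'a \<Rightarrow> 'b mult" where
  "one_tens b = (tlift s2 s2 t2 (\<lambda>x y. t2 x (b * y)), tlift s2 s2 t2 (\<lambda>x y. t2 x (y * b)))"

definition tens_one :: "'a \<Rightarrow> 'b mult" where
  "tens_one b = (tlift s2 s2 t2 (\<lambda>x y. t2 (b * x) y), tlift s2 s2 t2 (\<lambda>x y. t2 (x * b) y))"

definition lift3 :: "('a \<Rightarrow> 'a \<Rightarrow> 'a \<Rightarrow> 'z::ab_group_add) \<Rightarrow> (complex \<Rightarrow> 'z \<Rightarrow> 'z) \<Rightarrow> 'c \<Rightarrow> 'z" where
  "lift3 g sz = tlift s3 sz t3 (\<lambda>w c. tlift s2 sz t2 (\<lambda>a b. g a b c) w)"

definition tens_left :: "'a \<Rightarrow> 'b \<Rightarrow> 'c" where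
  "tens_left a w = tlift s2 s3 t2 (\<lambda>b c. t3 (t2 a b) c) w"

definition tens_one_one :: "'a \<Rightarrow> 'c mult" where
  "tens_one_one a = (lift3 (\<lambda>x y z. t3 (t2 (a * x) y) z) s3, lift3 (\<lambda>x y z. t3 (t2 (x * a) y) z) s3)"

definition one_one_tens :: "'a \<Rightarrow> 'c mult" where
  "one_one_tens c = (tlift s3 s3 t3 (\<lambda>w z. t3 w (c * z)), tlift s3 s3 t3 (\<lambda>w z. t3 w (z * c)))"

text \<open>(\<Delta>\<otimes>\<iota>)(x) in M(A\<otimes>A\<otimes>A), for x in A\<otimes>A: on p\<otimes>q it is \<Delta>(p)\<otimes>q.\<close>
definition comult_id :: "('a \<Rightarrow> 'b mult) \<Rightarrow> 'b \<Rightarrow> 'c mult" where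
  "comult_id D x =
    (tlift s3 s3 t3 (\<lambda>y r. tlift s2 s3 t2 (\<lambda>p q. t3 (fst (D p) y) (q * r)) x),
     tlift s3 s3 t3 (\<lambda>y r. tlift s2 s3 t2 (\<lambda>p q. t3 (snd (D p) y) (r * q)) x))"

text \<open>(\<iota>\<otimes>\<Delta>)(x) in M(A\<otimes>A\<otimes>A), for x in A\<otimes>A: on p\<otimes>q it is p\<otimes>\<Delta>(q).\<close>
definition id_comult :: "('a \<Rightarrow> 'b mult) \<Rightarrow> 'b \<Rightarrow> 'c mult" where
  "id_comult D x =
    (lift3 (\<lambda>a b c. tlift s2 s3 t2 (\<lambda>p q. tens_left (p * a) (fst (D q) (t2 b c))) x) s3,
     lift3 (\<lambda>a b c. tlift s2 s3 t2 (\<lambda>p q. tens_left (a * p) (snd (D q) (t2 b c))) x) s3)"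

definition slice_left :: "('a \<Rightarrow> complex) \<Rightarrow> 'b \<Rightarrow> 'a" where
  "slice_left f = tlift s2 s1 t2 (\<lambda>x y. s1 (f x) y)"

definition slice_right :: "('a \<Rightarrow> complex) \<Rightarrow> 'b \<Rightarrow> 'a" where
  "slice_right f = tlift s2 s1 t2 (\<lambda>x y. s1 (f y) x)"

text \<open>Regular comultiplication (not assumed multiplicative).\<close>
definition reg_comult :: "('a \<Rightarrow> 'b mult) \<Rightarrow> bool" where
  "reg_comult D \<longleftrightarrow>
     (\<forall>a. is_mult s2 (D a)) \<and>
     (\<forall>x. Vector_Spaces.linear s1 s2 (\<lambda>a. fst (D a) x) \<and>
          Vector_Spaces.linear s1 s2 (\<lambda>a. snd (D a) x)) \<and>
     (\<forall>a b. in_alg (mmult (D a) (one_tens b))) \<and>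
     (\<forall>a b. in_alg (mmult (tens_one a) (D b))) \<and>
     (\<forall>a b. in_alg (mmult (D a) (tens_one b))) \<and>
     (\<forall>a b. in_alg (mmult (one_tens a) (D b))) \<and>
     (\<forall>a b c. mmult (tens_one_one a) (comult_id D (elt (mmult (D b) (one_tens c))))
             = mmult (id_comult D (elt (mmult (tens_one a) (D b)))) (one_one_tens c))"

definition is_counit :: "('a \<Rightarrow> 'b mult) \<Rightarrow> ('a \<Rightarrow> complex) \<Rightarrow> bool" where
  "is_counit D e \<longleftrightarrow>
     Vector_Spaces.linear s1 (*) e \<and> (\<forall>a b. e (a * b) = e a * e b) \<and>
     (\<forall>a b. slice_left e (elt (mmult (D a) (one_tens b))) = a * b) \<and>
     (\<forall>a b. slice_left e (elt (mmult (one_tens b) (D a))) = b * a) \<and>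
     (\<forall>a b. slice_right e (elt (mmult (D a) (tens_one b))) = a * b) \<and>
     (\<forall>a b. slice_right e (elt (mmult (tens_one b) (D a))) = b * a)"

text \<open>Left integral: (\<iota>\<otimes>\<phi>)\<Delta>(a) = \<phi>(a)1 in M(A), where the multiplier
(\<iota>\<otimes>\<phi>)\<Delta>(a) acts by c \<mapsto> (\<iota>\<otimes>\<phi>)(\<Delta>(a)(c\<otimes>1)) and c \<mapsto> (\<iota>\<otimes>\<phi>)((c\<otimes>1)\<Delta>(a)).\<close>
definition left_integral :: "('a \<Rightarrow> 'b mult) \<Rightarrow> ('a \<Rightarrow> complex) \<Rightarrow> bool" where
  "left_integral D phi \<longleftrightarrow>
     Vector_Spaces.linear s1 (*) phi \<and> (\<exists>a. phi a \<noteq> 0) \<and>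
     (\<forall>a c. slice_right phi (elt (mmult (D a) (tens_one c))) = s1 (phi a) c) \<and>
     (\<forall>a c. slice_right phi (elt (mmult (tens_one c) (D a))) = s1 (phi a) c)"

definition faithful :: "('a \<Rightarrow> complex) \<Rightarrow> bool" where
  "faithful f \<longleftrightarrow> (\<forall>a. (\<forall>b. f (a * b) = 0) \<longrightarrow> a = 0) \<and>
                  (\<forall>a. (\<forall>b. f (b * a) = 0) \<longrightarrow> a = 0)"

definition is_antipode :: "('a \<Rightarrow> 'b mult) \<Rightarrow> ('a \<Rightarrow> complex) \<Rightarrow> ('a \<Rightarrow> 'a) \<Rightarrow> bool" where
  "is_antipode D phi S \<longleftrightarrow>
     bij S \<and> Vector_Spaces.linear s1 s1 S \<and> (\<forall>a b. S (a * b) = S b * S a) \<and>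
     (\<forall>a b. S (slice_right phi (elt (mmult (D a) (one_tens b))))
            = slice_right phi (elt (mmult (one_tens a) (D b))))"

definition is_aqh :: "('a \<Rightarrow> 'b mult) \<Rightarrow> ('a \<Rightarrow> complex) \<Rightarrow> ('a \<Rightarrow> complex) \<Rightarrow> ('a \<Rightarrow> 'a) \<Rightarrow> bool" where
  "is_aqh D e phi S \<longleftrightarrow>
     tensor_setup s1 s2 t2 s3 t3 \<and> reg_comult D \<and> is_counit D e \<and>
     left_integral D phi \<and> faithful phi \<and> is_antipode D phi S"

end

definition compact_type :: "'a::ring itself \<Rightarrow> bool" where
  "compact_type T \<longleftrightarrow> (\<exists>u::'a. \<forall>a. u * a = a \<and> a * u = a)"

definition left_cointegral :: "(complex \<Rightarrow> 'a::ring \<Rightarrow> 'a) \<Rightarrow> ('a \<Rightarrow> complex) \<Rightarrow> 'a \<Rightarrow> bool" where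
  "left_cointegral s1 e h \<longleftrightarrow> h \<noteq> 0 \<and> (\<forall>a. a * h = s1 (e a) h)"

definition discrete_type :: "(complex \<Rightarrow> 'a::ring \<Rightarrow> 'a) \<Rightarrow> ('a \<Rightarrow> complex) \<Rightarrow> bool" where
  "discrete_type s1 e \<longleftrightarrow> (\<exists>h. left_cointegral s1 e h)"

end

theory Submission
  imports Defs
begin

(* If A has a unit u and a left co-integral h, every \<Delta>(a) is an element of A\<otimes>A, and the
   counit turns \<Delta>(a)(1\<otimes>h) into a\<otimes>h.  The antipode identity then gives
   S(\<phi>(h) a) = (\<iota>\<otimes>\<phi>)((1\<otimes>a)\<Delta>(h)), which lies in the span of the finitely many first legs
   of \<Delta>(h).  As \<phi>(h) \<noteq> 0 by faithfulness and S is bijective, A is finite-dimensional.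
   Conversely, on a finite-dimensional A the faithful \<phi> represents every functional as
   \<phi>(\<cdot> c) and as \<phi>(c \<cdot>): representing \<phi> itself yields a unit, and writing \<epsilon> = \<phi>(\<cdot> h)
   makes h a left co-integral. *)

lemma linear_map_add: "Vector_Spaces.linear s1 s2 f \<Longrightarrow> f (x + y) = f x + f y"
  by (simp add: Vector_Spaces.linear_iff)

lemma linear_map_scale: "Vector_Spaces.linear s1 s2 f \<Longrightarrow> f (s1 c x) = s2 c (f x)"
  by (simp add: Vector_Spaces.linear_iff)

lemma linear_map_sum: "Vector_Spaces.linear s1 s2 f \<Longrightarrow> f (\<Sum>x\<in>A. g x) = (\<Sum>x\<in>A. f (g x))"
  by (rule module_hom.sum[OF module_hom_linearI])

lemma linear_map_zero: "Vector_Spaces.linear s1 s2 f \<Longrightarrow> f 0 = 0"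
  by (rule module_hom.zero[OF module_hom_linearI])

lemma linear_map_diff: "Vector_Spaces.linear s1 s2 f \<Longrightarrow> f (x - y) = f x - f y"
  by (rule module_hom.diff[OF module_hom_linearI])

lemma bilin_linear_left: "bilin su sv sw t \<Longrightarrow> Vector_Spaces.linear su sw (\<lambda>u. t u v)"
  and bilin_linear_right: "bilin su sv sw t \<Longrightarrow> Vector_Spaces.linear sv sw (t u)"
  by (simp_all add: bilin_def)

lemma bilin_compose_left:
  "bilin su sv sw t \<Longrightarrow> Vector_Spaces.linear su su g \<Longrightarrow> bilin su sv sw (\<lambda>x y. t (g x) y)"
  unfolding bilin_def using Vector_Spaces.linear_compose[of su su g sw] by (auto simp: comp_def)

lemma bilin_compose_right:
  "bilin su sv sw t \<Longrightarrow> Vector_Spaces.linear sv sv g \<Longrightarrow> bilin su sv sw (\<lambda>x y. t x (g y))"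
  unfolding bilin_def using Vector_Spaces.linear_compose[of sv sv g sw] by (auto simp: comp_def)

lemma bilin_slice:
  assumes "vector_space s" "Vector_Spaces.linear s (*) f"
  shows "bilin s s s (\<lambda>x y. s (f y) x)"
proof -
  interpret vector_space s by fact
  show ?thesis
    unfolding bilin_def
    using Vector_Spaces.linear_compose[OF assms(2) linear_scale_left] by (simp add: comp_def)
qed

lemma bilin_sum_scale_left:
  "bilin su sv sz f \<Longrightarrow> f (\<Sum>b\<in>K. su (r b) b) v = (\<Sum>b\<in>K. f b (sv (r b) v))"
  by (simp add: linear_map_sum[OF bilin_linear_left] linear_map_scale[OF bilin_linear_left]
      linear_map_scale[OF bilin_linear_right])

lemma sum_zero_extension:
  assumes "finite L" "K \<subseteq> L" "\<And>b. h b 0 = 0"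
  shows "(\<Sum>b\<in>K. h b (g b)) = (\<Sum>b\<in>L. h b (if b \<in> K then g b else 0))"
  by (rule sum.mono_neutral_cong_left) (use assms in auto)

lemma calg_vector_space: "calg s \<Longrightarrow> vector_space s"
  and calg_scale_mult_left: "calg s \<Longrightarrow> s c x * y = s c (x * y)"
  by (simp_all add: calg_def)

lemma calg_scale_mult_right: "calg s \<Longrightarrow> x * s c y = s c (x * y)"
  unfolding calg_def by metis

lemma calg_linear_mult_left: "calg s \<Longrightarrow> Vector_Spaces.linear s s ((*) b)"
  by (simp add: Vector_Spaces.linear_iff calg_vector_space calg_scale_mult_right distrib_left)

lemma calg_linear_mult_right: "calg s \<Longrightarrow> Vector_Spaces.linear s s (\<lambda>x. x * b)"
  by (simp add: Vector_Spaces.linear_iff calg_vector_space calg_scale_mult_left distrib_right)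

locale tensor_product =
  U: vector_space su + V: vector_space sv + W: vector_space sw
  for su :: "complex \<Rightarrow> 'u::ab_group_add \<Rightarrow> 'u"
    and sv :: "complex \<Rightarrow> 'v::ab_group_add \<Rightarrow> 'v"
    and sw :: "complex \<Rightarrow> 'w::ab_group_add \<Rightarrow> 'w" +
  fixes t :: "'u \<Rightarrow> 'v \<Rightarrow> 'w"
  assumes bilinear: "bilin su sv sw t"
    and span_tensors: "W.span {t u v | u v. True} = UNIV"
    and tensors_independent:
      "\<And>F g u. finite F \<Longrightarrow> \<not> U.dependent F \<Longrightarrow> (\<Sum>u\<in>F. t u (g u)) = 0 \<Longrightarrow> u \<in> F \<Longrightarrow> g u = 0"

lemma is_tensor_iff_tensor_product: "is_tensor su sv sw t \<longleftrightarrow> tensor_product su sv sw t"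
  unfolding is_tensor_def tensor_product_def tensor_product_axioms_def by blast

context tensor_product
begin

(* Expansions \<Sum>b\<in>K. t b (g b) over a fixed basis of U are unique, so the linear extension
   of a bilinear map can be read off from them. *)
definition basis :: "'u set" where
  "basis = (SOME B. U.independent B \<and> U.span B = UNIV)"

lemma basis_independent: "U.independent basis"
  and basis_span: "U.span basis = UNIV"
proof -
  obtain B where "U.independent B" "UNIV \<subseteq> U.span B"
    using U.basis_exists[of UNIV] by blast
  then have "\<exists>B. U.independent B \<and> U.span B = UNIV" by blast
  from someI_ex[OF this] show "U.independent basis" "U.span basis = UNIV"
    unfolding basis_def by auto
qed

definition expansion :: "'w \<Rightarrow> 'u set \<Rightarrow> ('u \<Rightarrow> 'v) \<Rightarrow> bool" where
  "expansion w K g \<longleftrightarrow> finite K \<and> K \<subseteq> basis \<and> w = (\<Sum>b\<in>K. t b (g b))"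

lemma expansion_extend:
  assumes "expansion w K g" "K \<subseteq> L" "finite L" "L \<subseteq> basis"
  shows "expansion w L (\<lambda>b. if b \<in> K then g b else 0)"
  using assms sum_zero_extension[of L K t g] linear_map_zero[OF bilin_linear_right[OF bilinear]]
  unfolding expansion_def by auto

lemma expansion_common_support:
  assumes "expansion w1 K1 g1" "expansion w2 K2 g2"
  shows "expansion w1 (K1 \<union> K2) (\<lambda>b. if b \<in> K1 then g1 b else 0)"
    and "expansion w2 (K1 \<union> K2) (\<lambda>b. if b \<in> K2 then g2 b else 0)"
proof -
  have "finite (K1 \<union> K2)" "K1 \<union> K2 \<subseteq> basis"
    using assms unfolding expansion_def by auto
  then show "expansion w1 (K1 \<union> K2) (\<lambda>b. if b \<in> K1 then g1 b else 0)"
    and "expansion w2 (K1 \<union> K2) (\<lambda>b. if b \<in> K2 then g2 b else 0)"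
    using expansion_extend[OF assms(1)] expansion_extend[OF assms(2)] by auto
qed

lemma expansion_add:
  "expansion w1 K g1 \<Longrightarrow> expansion w2 K g2 \<Longrightarrow> expansion (w1 + w2) K (\<lambda>b. g1 b + g2 b)"
  unfolding expansion_def by (simp add: linear_map_add[OF bilin_linear_right[OF bilinear]] sum.distrib)

lemma expansion_scale: "expansion w K g \<Longrightarrow> expansion (sw c w) K (\<lambda>b. sv c (g b))"
  unfolding expansion_def
  by (simp add: linear_map_scale[OF bilin_linear_right[OF bilinear]] W.scale_sum_right)

lemma basis_coordinates:
  obtains K r where "finite K" "K \<subseteq> basis" "u = (\<Sum>b\<in>K. su (r b) b)"
  using basis_span unfolding U.span_explicit by blast

lemma expansion_tensor:
  "finite K \<Longrightarrow> K \<subseteq> basis \<Longrightarrow> u = (\<Sum>b\<in>K. su (r b) b) \<Longrightarrow> expansion (t u v) K (\<lambda>b. sv (r b) v)"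
  unfolding expansion_def using bilin_sum_scale_left[OF bilinear] by blast

lemma expansion_exists: "\<exists>K g. expansion w K g"
proof -
  define R where "R = {w. \<exists>K g. expansion w K g}"
  have "W.subspace R"
    unfolding W.subspace_def
  proof (intro conjI ballI allI)
    show "0 \<in> R"
      unfolding R_def expansion_def by (auto intro!: exI[of _ "{}"])
    show "x + y \<in> R" if xy: "x \<in> R" "y \<in> R" for x y
    proof -
      obtain K1 g1 K2 g2 where "expansion x K1 g1" "expansion y K2 g2"
        using xy unfolding R_def by blast
      from expansion_add[OF expansion_common_support[OF this]] show ?thesis
        unfolding R_def by blast
    qed
    show "sw c x \<in> R" if "x \<in> R" for c x
      using that expansion_scale unfolding R_def by blast
  qed
  moreover have "t u v \<in> R" for u v
  proof -
    obtain K r where "finite K" "K \<subseteq> basis" "u = (\<Sum>b\<in>K. su (r b) b)"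
      by (rule basis_coordinates)
    from expansion_tensor[OF this] show ?thesis unfolding R_def by blast
  qed
  ultimately have "W.span {t u v | u v. True} \<subseteq> R"
    using W.span_minimal[of "{t u v | u v. True}" R] by blast
  then have "w \<in> R"
    using span_tensors by blast
  then show ?thesis
    unfolding R_def by blast
qed

lemma expansion_unique:
  assumes "expansion w K g" "expansion w K g'" "b \<in> K"
  shows "g b = g' b"
proof -
  have "(\<Sum>b\<in>K. t b (g b - g' b)) = 0"
    using assms(1,2) unfolding expansion_def
    by (simp add: linear_map_diff[OF bilin_linear_right[OF bilinear]] sum_subtractf)
  moreover have "\<not> U.dependent K"
    using assms(1) basis_independent U.independent_mono unfolding expansion_def by blast
  ultimately show ?thesis
    using tensors_independent[of K "\<lambda>b. g b - g' b"] assms unfolding expansion_def by auto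
qed

end

locale tensor_lift = tensor_product su sv sw t + Z: vector_space sz
  for su :: "complex \<Rightarrow> 'u::ab_group_add \<Rightarrow> 'u"
    and sv :: "complex \<Rightarrow> 'v::ab_group_add \<Rightarrow> 'v"
    and sw :: "complex \<Rightarrow> 'w::ab_group_add \<Rightarrow> 'w"
    and t :: "'u \<Rightarrow> 'v \<Rightarrow> 'w"
    and sz :: "complex \<Rightarrow> 'z::ab_group_add \<Rightarrow> 'z" +
  fixes f :: "'u \<Rightarrow> 'v \<Rightarrow> 'z"
  assumes bilinear_f: "bilin su sv sz f"
begin

lemma expansion_value_unique:
  assumes "expansion w K g" "expansion w L h"
  shows "(\<Sum>b\<in>K. f b (g b)) = (\<Sum>b\<in>L. f b (h b))"
proof -
  have f0: "\<And>b. f b 0 = 0" using linear_map_zero[OF bilin_linear_right[OF bilinear_f]] .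
  have fin: "finite (K \<union> L)" using assms unfolding expansion_def by blast
  have "(\<Sum>b\<in>K. f b (g b)) = (\<Sum>b\<in>K \<union> L. f b (if b \<in> K then g b else 0))"
    by (rule sum_zero_extension[OF fin]) (auto simp: f0)
  also have "\<dots> = (\<Sum>b\<in>K \<union> L. f b (if b \<in> L then h b else 0))"
    using expansion_unique[OF expansion_common_support[OF assms]] by (intro sum.cong) auto
  also have "\<dots> = (\<Sum>b\<in>L. f b (h b))"
    by (rule sum_zero_extension[OF fin, symmetric]) (auto simp: f0)
  finally show ?thesis .
qed

definition lift :: "'w \<Rightarrow> 'z" where
  "lift w = (SOME z. \<exists>K g. expansion w K g \<and> z = (\<Sum>b\<in>K. f b (g b)))"

lemma lift_expansion:
  assumes "expansion w K g"
  shows "lift w = (\<Sum>b\<in>K. f b (g b))"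
  unfolding lift_def
proof (rule some_equality)
  show "\<exists>K' g'. expansion w K' g' \<and> (\<Sum>b\<in>K. f b (g b)) = (\<Sum>b\<in>K'. f b (g' b))"
    using assms by blast
  show "z = (\<Sum>b\<in>K. f b (g b))" if "\<exists>K' g'. expansion w K' g' \<and> z = (\<Sum>b\<in>K'. f b (g' b))" for z
    using that expansion_value_unique[OF assms] by metis
qed

lemma linear_lift: "Vector_Spaces.linear sw sz lift"
  unfolding Vector_Spaces.linear_iff
proof (intro conjI allI)
  show "vector_space sw" "vector_space sz" by unfold_locales
next
  fix x y
  obtain K1 g1 K2 g2 where "expansion x K1 g1" "expansion y K2 g2"
    using expansion_exists by meson
  from expansion_common_support[OF this] show "lift (x + y) = lift x + lift y"
    by (simp add: lift_expansion[OF expansion_add] lift_expansion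
        linear_map_add[OF bilin_linear_right[OF bilinear_f]] sum.distrib)
next
  fix c x
  obtain K g where "expansion x K g" using expansion_exists by blast
  then show "lift (sw c x) = sz c (lift x)"
    by (simp add: lift_expansion[OF expansion_scale] lift_expansion linear_map_scale[OF bilin_linear_right[OF bilinear_f]]
        Z.scale_sum_right)
qed

lemma lift_tensor: "lift (t u v) = f u v"
proof -
  obtain K r where "finite K" "K \<subseteq> basis" "u = (\<Sum>b\<in>K. su (r b) b)"
    by (rule basis_coordinates)
  then show ?thesis
    by (simp add: lift_expansion[OF expansion_tensor] bilin_sum_scale_left[OF bilinear_f])
qed

lemma tlift_spec: "Vector_Spaces.linear sw sz (tlift sw sz t f) \<and> (\<forall>u v. tlift sw sz t f (t u v) = f u v)"
  unfolding tlift_def by (rule someI[of _ lift]) (simp add: linear_lift lift_tensor)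

end

lemma tensor_lift_if_is_tensor:
  "is_tensor su sv sw t \<Longrightarrow> vector_space sz \<Longrightarrow> bilin su sv sz f \<Longrightarrow> tensor_lift su sv sw t sz f"
  by (simp add: tensor_lift_def tensor_lift_axioms_def is_tensor_iff_tensor_product)

lemma
  assumes "is_tensor su sv sw t" "vector_space sz" "bilin su sv sz f"
  shows tlift_linear: "Vector_Spaces.linear sw sz (tlift sw sz t f)"
    and tlift_tensor: "tlift sw sz t f (t u v) = f u v"
  using tensor_lift.tlift_spec[OF tensor_lift_if_is_tensor[OF assms]] by simp_all

lemma tensor_expansion:
  assumes "is_tensor su sv sw t"
  obtains K g where "finite K" "w = (\<Sum>b\<in>K. t b (g b))"
proof -
  interpret tensor_product su sv sw t
    using assms by (simp add: is_tensor_iff_tensor_product)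
  obtain K g where "expansion w K g"
    using expansion_exists by blast
  then show ?thesis
    unfolding expansion_def using that by blast
qed

lemma tensor_unit:
  fixes t :: "'a::ring \<Rightarrow> 'a \<Rightarrow> 'b::ring"
  assumes "is_tensor su su sw t" and tensor_mult: "\<And>a b c d. t a b * t c d = t (a * c) (b * d)"
    and unit: "\<And>a. u * a = a" "\<And>a. a * u = a"
  shows "t u u * w = w" "w * t u u = w"
proof -
  obtain K g where "finite K" "w = (\<Sum>b\<in>K. t b (g b))"
    using assms(1) by (rule tensor_expansion)
  then show "t u u * w = w" "w * t u u = w"
    by (simp_all add: sum_distrib_left sum_distrib_right tensor_mult unit)
qed

lemma is_tensor_vector_spaces: "is_tensor su sv sw t \<Longrightarrow> vector_space su \<and> vector_space sw"
  and is_tensor_bilin: "is_tensor su sv sw t \<Longrightarrow> bilin su sv sw t"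
  by (simp_all add: is_tensor_def)

lemma
  assumes "is_tensor s s s2 t2" "Vector_Spaces.linear s (*) f"
  shows slice_right_linear: "Vector_Spaces.linear s2 s (slice_right s s2 t2 f)"
    and slice_right_tensor: "slice_right s s2 t2 f (t2 x y) = s (f y) x"
proof -
  have "vector_space s" using is_tensor_vector_spaces[OF assms(1)] by blast
  from tlift_linear[OF assms(1) this] tlift_tensor[OF assms(1) this] bilin_slice[OF this assms(2)]
  show "Vector_Spaces.linear s2 s (slice_right s s2 t2 f)" "slice_right s s2 t2 f (t2 x y) = s (f y) x"
    unfolding slice_right_def by blast+
qed

lemma
  assumes "is_tensor s1 s1 s2 t2" "calg s1"
  shows one_tens_linear: "Vector_Spaces.linear s2 s2 (fst (one_tens s2 t2 b))"
    and one_tens_tensor: "fst (one_tens s2 t2 b) (t2 x y) = t2 x (b * y)"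
    and tens_one_tensor: "fst (tens_one s2 t2 b) (t2 x y) = t2 (b * x) y"
proof -
  have "vector_space s2" using is_tensor_vector_spaces[OF assms(1)] by blast
  note lift = tlift_linear[OF assms(1) this] tlift_tensor[OF assms(1) this]
  have "bilin s1 s1 s2 (\<lambda>x y. t2 x (b * y))" "bilin s1 s1 s2 (\<lambda>x y. t2 (b * x) y)"
    using bilin_compose_right[OF is_tensor_bilin calg_linear_mult_left]
      bilin_compose_left[OF is_tensor_bilin calg_linear_mult_left] assms by blast+
  with lift show "Vector_Spaces.linear s2 s2 (fst (one_tens s2 t2 b))"
    "fst (one_tens s2 t2 b) (t2 x y) = t2 x (b * y)" "fst (tens_one s2 t2 b) (t2 x y) = t2 (b * x) y"
    unfolding one_tens_def tens_one_def fst_conv by blast+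
qed

lemma elt_embed:
  fixes z one :: "'a::ring"
  assumes "\<And>w. w * one = w"
  shows "elt (embed z) = z"
  unfolding elt_def
proof (rule the_equality)
  show "z' = z" if "embed z = embed z'" for z'
  proof -
    have "(\<lambda>x. z * x) = (\<lambda>x. z' * x)"
      using that unfolding embed_def by simp
    then have "z * one = z' * one" by metis
    then show ?thesis using assms by simp
  qed
qed simp

lemma elt_mmult:
  fixes one :: "'a::ring"
  assumes "\<And>w. w * one = w" and "in_alg (mmult m n)"
  shows "elt (mmult m n) = fst m (fst n one)"
proof -
  obtain z where z: "mmult m n = embed z"
    using assms(2) unfolding in_alg_def by blast
  then have "fst m (fst n one) = z * one"
    unfolding mmult_def embed_def by (metis comp_apply fst_conv)
  then show ?thesis
    using z elt_embed[OF assms(1)] assms(1) by simp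
qed

lemma fin_dim_basis:
  assumes "vector_space s" "fin_dim s"
  obtains B where "finite B" "\<not> module.dependent s B" "module.span s B = UNIV"
proof -
  interpret vector_space s by fact
  obtain B0 where B0: "finite B0" "span B0 = UNIV"
    using assms(2) unfolding fin_dim_def by blast
  obtain B where B: "independent B" "UNIV \<subseteq> span B"
    using basis_exists[of UNIV] by blast
  moreover have "finite B"
    using independent_span_bound[OF B0(1) B(1)] B0(2) by blast
  ultimately show ?thesis
    using that by blast
qed

lemma nondegenerate_pairing_represents_functional:
  fixes s :: "complex \<Rightarrow> 'a::ab_group_add \<Rightarrow> 'a" and P :: "'a \<Rightarrow> 'a \<Rightarrow> complex"
  assumes "vector_space s" "fin_dim s"
    and P_left: "\<And>c. Vector_Spaces.linear s (*) (\<lambda>x. P x c)"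
    and P_right: "\<And>x. Vector_Spaces.linear s (*) (P x)"
    and nondegenerate: "\<And>c. (\<forall>x. P x c = 0) \<Longrightarrow> c = 0"
    and f: "Vector_Spaces.linear s (*) f"
  shows "\<exists>c. \<forall>x. f x = P x c"
proof -
  interpret vector_space s by fact
  obtain B where B: "finite B" "independent B" "span B = UNIV"
    using fin_dim_basis[OF assms(1,2)] .
  interpret finite_dimensional_vector_space s B
    using B by unfold_locales auto
  have coordinates_zero: "\<And>r b. (\<Sum>b\<in>B. s (r b) b) = 0 \<Longrightarrow> b \<in> B \<Longrightarrow> r b = 0"
    using independentD[OF B(2,1) subset_refl] by blast
  have zero_if_zero_on_B: "g x = 0" if "Vector_Spaces.linear s (*) g" "\<forall>b\<in>B. g b = 0" for g x
    using module_hom.eq_0_on_span[OF module_hom_linearI[OF that(1)]] that(2) B(3) by blast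
  \<comment> \<open>injective by nondegeneracy, hence onto by finite dimension\<close>
  define G where "G c = (\<Sum>b\<in>B. s (P b c) b)" for c
  have G_linear: "Vector_Spaces.linear s s G"
    unfolding Vector_Spaces.linear_iff G_def
    by (simp add: vector_space_axioms linear_map_add[OF P_right] linear_map_scale[OF P_right]
        scale_left_distrib sum.distrib scale_sum_right)
  have "inj G"
    unfolding module_hom.inj_iff_eq_0[OF module_hom_linearI[OF G_linear]]
  proof (intro allI impI)
    fix c assume "G c = 0"
    then have "\<forall>b\<in>B. P b c = 0"
      using coordinates_zero[of "\<lambda>b. P b c"] unfolding G_def by blast
    then show "c = 0"
      using nondegenerate zero_if_zero_on_B[OF P_left] by blast
  qed
  then obtain c where "G c = (\<Sum>b\<in>B. s (f b) b)"
    using linear_inj_imp_surj[OF G_linear] by (metis surj_def)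
  then have "(\<Sum>b\<in>B. s (f b - P b c) b) = 0"
    unfolding G_def by (simp add: scale_left_diff_distrib sum_subtractf)
  then have "\<forall>b\<in>B. f b - P b c = 0"
    using coordinates_zero[of "\<lambda>b. f b - P b c"] by blast
  moreover have "Vector_Spaces.linear s (*) (\<lambda>x. f x - P x c)"
    using f P_left[of c] unfolding Vector_Spaces.linear_iff by (simp add: algebra_simps)
  ultimately show ?thesis
    using zero_if_zero_on_B by fastforce
qed

lemma
  assumes "calg s" "fin_dim s" "Vector_Spaces.linear s (*) phi" "faithful phi"
    and "Vector_Spaces.linear s (*) f"
  shows faithful_represents_right: "\<exists>c. \<forall>x. f x = phi (x * c)"
    and faithful_represents_left: "\<exists>c. \<forall>x. f x = phi (c * x)"
proof -
  have compose: "Vector_Spaces.linear s (*) (\<lambda>x. phi (g x))" if "Vector_Spaces.linear s s g" for g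
    using Vector_Spaces.linear_compose[OF that assms(3)] by (simp add: comp_def)
  note mult_linear = calg_linear_mult_left[OF assms(1)] calg_linear_mult_right[OF assms(1)]
  show "\<exists>c. \<forall>x. f x = phi (x * c)"
    by (rule nondegenerate_pairing_represents_functional[OF calg_vector_space[OF assms(1)] assms(2)
          compose compose _ assms(5)])
      (use assms(4) mult_linear in \<open>auto simp: faithful_def\<close>)
  show "\<exists>c. \<forall>x. f x = phi (c * x)"
    by (rule nondegenerate_pairing_represents_functional[OF calg_vector_space[OF assms(1)] assms(2)
          compose compose _ assms(5)])
      (use assms(4) mult_linear in \<open>auto simp: faithful_def\<close>)
qed

lemma compact_type_if_faithful:
  fixes s :: "complex \<Rightarrow> 'a::ring \<Rightarrow> 'a"
  assumes "calg s" "fin_dim s" "Vector_Spaces.linear s (*) phi" "faithful phi"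
  shows "compact_type TYPE('a)"
proof -
  obtain u1 :: 'a where u1: "\<And>x. phi x = phi (x * u1)"
    using faithful_represents_right[OF assms assms(3)] by blast
  obtain u2 :: 'a where u2: "\<And>x. phi x = phi (u2 * x)"
    using faithful_represents_left[OF assms assms(3)] by blast
  have right_unit: "a * u1 = a" for a
  proof -
    have "\<forall>b. phi (b * (a * u1 - a)) = 0"
      using u1 by (simp add: right_diff_distrib linear_map_diff[OF assms(3)] mult.assoc[symmetric])
    then show ?thesis
      using assms(4) unfolding faithful_def by (metis eq_iff_diff_eq_0)
  qed
  have left_unit: "u2 * a = a" for a
  proof -
    have "\<forall>b. phi ((u2 * a - a) * b) = 0"
      using u2 by (simp add: left_diff_distrib linear_map_diff[OF assms(3)] mult.assoc)
    then show ?thesis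
      using assms(4) unfolding faithful_def by (metis eq_iff_diff_eq_0)
  qed
  have "u2 = u1"
    using right_unit[of u2] left_unit[of u1] by simp
  then show ?thesis
    unfolding compact_type_def using left_unit right_unit by metis
qed

lemma discrete_type_if_faithful:
  assumes "calg s" "fin_dim s" "Vector_Spaces.linear s (*) phi" "faithful phi"
    and "Vector_Spaces.linear s (*) e" "\<And>a b. e (a * b) = e a * e b" "e a0 \<noteq> 0"
  shows "discrete_type s e"
proof -
  obtain h where h: "\<And>x. e x = phi (x * h)"
    using faithful_represents_right[OF assms(1-4,5)] by blast
  have "a * h = s (e a) h" for a
  proof -
    have "phi (b * (a * h - s (e a) h)) = e (b * a) - e a * e b" for b
      by (simp add: h right_diff_distrib linear_map_diff[OF assms(3)] linear_map_scale[OF assms(3)]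
          calg_scale_mult_right[OF assms(1)] mult.assoc)
    then have "phi (b * (a * h - s (e a) h)) = 0" for b
      by (simp add: assms(6))
    then show ?thesis
      using assms(4) unfolding faithful_def by (metis eq_iff_diff_eq_0)
  qed
  moreover have "h \<noteq> 0"
    using h[of a0] assms(7) by (auto simp: linear_map_zero[OF assms(3)])
  ultimately show ?thesis
    unfolding discrete_type_def left_cointegral_def by blast
qed

locale aqh =
  fixes s1 :: "complex \<Rightarrow> 'a::ring \<Rightarrow> 'a"
    and s2 :: "complex \<Rightarrow> 'b::ring \<Rightarrow> 'b"
    and t2 :: "'a \<Rightarrow> 'a \<Rightarrow> 'b"
    and s3 :: "complex \<Rightarrow> 'c::ring \<Rightarrow> 'c"
    and t3 :: "'b \<Rightarrow> 'a \<Rightarrow> 'c"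
    and D :: "'a \<Rightarrow> 'b mult"
    and e phi :: "'a \<Rightarrow> complex"
    and S :: "'a \<Rightarrow> 'a"
  assumes aqh: "is_aqh s1 s2 t2 s3 t3 D e phi S"
begin

lemma calg: "calg s1"
  and nondeg: "nondeg TYPE('a)"
  and tensor: "is_tensor s1 s1 s2 t2"
  and tensor_mult: "\<And>a b c d. t2 a b * t2 c d = t2 (a * c) (b * d)"
  and reg_comult: "reg_comult s1 s2 t2 s3 t3 D"
  and counit: "is_counit s1 s2 t2 D e"
  and integral: "left_integral s1 s2 t2 D phi"
  and faithful: "faithful phi"
  and antipode: "is_antipode s1 s2 t2 D phi S"
  using aqh unfolding is_aqh_def tensor_setup_def by blast+

lemma antipode_linear: "Vector_Spaces.linear s1 s1 S"
  using antipode unfolding is_antipode_def by blast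

lemma counit_linear: "Vector_Spaces.linear s1 (*) e"
  using counit unfolding is_counit_def by blast

lemma integral_linear: "Vector_Spaces.linear s1 (*) phi"
  using integral unfolding left_integral_def by blast

lemma counit_mult: "e (a * b) = e a * e b"
  using counit unfolding is_counit_def by blast

lemma counit_nonzero:
  obtains a0 where "e a0 \<noteq> 0"
proof (rule ccontr)
  assume "\<not> thesis"
  then have e0: "\<And>a. e a = 0" using that by blast
  have slice_zero: "slice_right s1 s2 t2 e w = 0" for w
  proof -
    interpret vector_space s1
      using calg by (rule calg_vector_space)
    obtain K g where "finite K" "w = (\<Sum>b\<in>K. t2 b (g b))"
      using tensor by (rule tensor_expansion)
    then show ?thesis
      by (simp add: linear_map_sum[OF slice_right_linear[OF tensor counit_linear]]
          slice_right_tensor[OF tensor counit_linear] e0)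
  qed
  have "a * b = 0" for a b :: 'a
  proof -
    have "slice_right s1 s2 t2 e (elt (mmult (D a) (tens_one s2 t2 b))) = a * b"
      using counit unfolding is_counit_def by blast
    then show ?thesis
      by (simp add: slice_zero)
  qed
  then have "a = 0" for a :: 'a
    using nondeg unfolding nondeg_def by blast
  then show False
    using integral linear_map_zero unfolding left_integral_def by metis
qed

end

locale compact_aqh = aqh s1 s2 t2 s3 t3 D e phi S
  for s1 :: "complex \<Rightarrow> 'a::ring \<Rightarrow> 'a" and s2 t2 s3 t3 D e phi S +
  fixes u :: 'a
  assumes unit_left: "\<And>a. u * a = a" and unit_right: "\<And>a. a * u = a"
begin

lemma tensor_one: "t2 u u * w = w" "w * t2 u u = w"
  using tensor_unit[OF tensor tensor_mult unit_left unit_right] by blast+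

(* With a unit, the multiplier \<Delta>(a) is multiplication by the element \<Delta>(a)(1\<otimes>1) of A\<otimes>A. *)
definition comult :: "'a \<Rightarrow> 'b" where
  "comult a = fst (D a) (t2 u u)"

lemma elt_mmult_one: "in_alg (mmult m n) \<Longrightarrow> elt (mmult m n) = fst m (fst n (t2 u u))"
  by (rule elt_mmult[OF tensor_one(2)])

lemma comult_mult: "fst (D a) w = comult a * w"
proof -
  have "is_mult s2 (D a)"
    using reg_comult unfolding reg_comult_def by blast
  then have "fst (D a) (t2 u u * w) = fst (D a) (t2 u u) * w"
    unfolding is_mult_def by blast
  then show ?thesis
    unfolding comult_def tensor_one by simp
qed

lemma slice_counit_comult: "slice_right s1 s2 t2 e (comult a) = a"
proof -
  have "in_alg (mmult (D a) (tens_one s2 t2 u))"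
    using reg_comult unfolding reg_comult_def by blast
  then have "elt (mmult (D a) (tens_one s2 t2 u)) = comult a"
    by (simp add: elt_mmult_one tens_one_tensor[OF tensor calg] comult_mult unit_left tensor_one)
  moreover have "slice_right s1 s2 t2 e (elt (mmult (D a) (tens_one s2 t2 u))) = a * u"
    using counit unfolding is_counit_def by blast
  ultimately show ?thesis
    by (simp add: unit_right)
qed

lemma comult_mult_cointegral:
  assumes "left_cointegral s1 e h"
  shows "comult a * t2 u h = t2 a h"
proof -
  obtain K g where K: "finite K" "comult a = (\<Sum>b\<in>K. t2 b (g b))"
    using tensor by (rule tensor_expansion)
  have "comult a * t2 u h = (\<Sum>b\<in>K. t2 b (s1 (e (g b)) h))"
    using assms unfolding K(2) left_cointegral_def
    by (simp add: sum_distrib_right tensor_mult unit_right)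
  also have "\<dots> = t2 (\<Sum>b\<in>K. s1 (e (g b)) b) h"
    using is_tensor_bilin[OF tensor]
    by (simp add: linear_map_sum[OF bilin_linear_left] linear_map_scale[OF bilin_linear_left]
        linear_map_scale[OF bilin_linear_right])
  also have "(\<Sum>b\<in>K. s1 (e (g b)) b) = a"
    using slice_counit_comult[of a]
    by (simp add: K(2) linear_map_sum[OF slice_right_linear[OF tensor counit_linear]]
        slice_right_tensor[OF tensor counit_linear])
  finally show ?thesis .
qed

lemma antipode_cointegral:
  assumes "left_cointegral s1 e h"
  shows "S (s1 (phi h) a) = slice_right s1 s2 t2 phi (fst (one_tens s2 t2 a) (comult h))"
proof -
  have "in_alg (mmult (D a) (one_tens s2 t2 h))" "in_alg (mmult (one_tens s2 t2 a) (D h))"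
    using reg_comult unfolding reg_comult_def by blast+
  then have "elt (mmult (D a) (one_tens s2 t2 h)) = t2 a h"
    and "elt (mmult (one_tens s2 t2 a) (D h)) = fst (one_tens s2 t2 a) (comult h)"
    by (simp_all add: elt_mmult_one one_tens_tensor[OF tensor calg] comult_mult unit_right
        comult_mult_cointegral[OF assms] tensor_one)
  moreover have "S (slice_right s1 s2 t2 phi (elt (mmult (D a) (one_tens s2 t2 h))))
      = slice_right s1 s2 t2 phi (elt (mmult (one_tens s2 t2 a) (D h)))"
    using antipode unfolding is_antipode_def by blast
  ultimately show ?thesis
    by (simp add: slice_right_tensor[OF tensor integral_linear])
qed

lemma integral_cointegral_nonzero:
  assumes "left_cointegral s1 e h"
  shows "phi h \<noteq> 0"
proof
  assume "phi h = 0"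
  then have "\<forall>b. phi (b * h) = 0"
    using assms unfolding left_cointegral_def by (simp add: linear_map_scale[OF integral_linear])
  then show False
    using faithful assms unfolding faithful_def left_cointegral_def by blast
qed

lemma fin_dim_if_cointegral:
  assumes "left_cointegral s1 e h"
  shows "fin_dim s1"
proof -
  interpret vector_space s1
    using calg by (rule calg_vector_space)
  obtain K g where K: "finite K" "comult h = (\<Sum>b\<in>K. t2 b (g b))"
    using tensor by (rule tensor_expansion)
  have S_scaled: "S (s1 (phi h) a) = (\<Sum>b\<in>K. s1 (phi (a * g b)) b)" for a
    by (simp add: antipode_cointegral[OF assms] K(2) linear_map_sum[OF one_tens_linear[OF tensor calg]]
        one_tens_tensor[OF tensor calg] linear_map_sum[OF slice_right_linear[OF tensor integral_linear]]
        slice_right_tensor[OF tensor integral_linear])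
  have S_scaled_in_span: "S (s1 (phi h) a) \<in> span K" for a
    unfolding S_scaled by (rule span_sum) (intro span_scale span_base)
  have S_unscaled: "S a = s1 (inverse (phi h)) (S (s1 (phi h) a))" for a
    using integral_cointegral_nonzero[OF assms] antipode_linear
    by (simp add: linear_map_scale scale_scale)
  have "range S \<subseteq> span K"
  proof
    fix x assume "x \<in> range S"
    then obtain a where "x = S a" by blast
    then show "x \<in> span K"
      using S_unscaled span_scale[OF S_scaled_in_span] by metis
  qed
  moreover have "surj S"
    using antipode unfolding is_antipode_def by (simp add: bij_is_surj)
  ultimately have "span K = UNIV"
    by blast
  then show ?thesis
    unfolding fin_dim_def using K(1) by blast
qed

end

theorem mainTheorem18:
  fixes s1 :: "complex \<Rightarrow> 'a::ring \<Rightarrow> 'a"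
    and s2 :: "complex \<Rightarrow> 'b::ring \<Rightarrow> 'b"
    and t2 :: "'a \<Rightarrow> 'a \<Rightarrow> 'b"
    and s3 :: "complex \<Rightarrow> 'c::ring \<Rightarrow> 'c"
    and t3 :: "'b \<Rightarrow> 'a \<Rightarrow> 'c"
    and D :: "'a \<Rightarrow> 'b mult"
    and e phi :: "'a \<Rightarrow> complex"
    and S :: "'a \<Rightarrow> 'a"
  assumes "is_aqh s1 s2 t2 s3 t3 D e phi S"
  shows "(compact_type TYPE('a) \<and> discrete_type s1 e) \<longleftrightarrow> fin_dim s1"
proof
  assume "compact_type TYPE('a) \<and> discrete_type s1 e"
  then obtain u :: 'a and h where unit: "\<forall>a. u * a = a \<and> a * u = a"
    and cointegral: "left_cointegral s1 e h"
    unfolding compact_type_def discrete_type_def by blast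
  interpret compact_aqh s1 s2 t2 s3 t3 D e phi S u
    using assms unit by unfold_locales auto
  show "fin_dim s1"
    using cointegral by (rule fin_dim_if_cointegral)
next
  assume "fin_dim s1"
  interpret aqh s1 s2 t2 s3 t3 D e phi S
    by (rule aqh.intro[OF assms])
  obtain a0 where "e a0 \<noteq> 0"
    by (rule counit_nonzero)
  then show "compact_type TYPE('a) \<and> discrete_type s1 e"
    using compact_type_if_faithful[OF calg \<open>fin_dim s1\<close> integral_linear faithful]
      discrete_type_if_faithful[OF calg \<open>fin_dim s1\<close> integral_linear faithful counit_linear counit_mult]
    by blast
qed

end
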